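(* Let $X$ be a supertropical semiring. (1) With its intrinsic order, $X$ is a bounded join-semilattice, with $\sup\emptyset=0$ and, for $x,y\in X$, $\sup\{x,y\}=x+y$ if $x\ne y$ and $\sup\{x,y\}=x$ if $x=y$. (2) Let $n\in\mathbb{N}$, $a_1,\dots,a_n\in X$, $s=a_1+\dots+a_n$ and $M=\sup\{a_1,\dots,a_n\}$. Then $s\notin\nu X$ if and only if $M\notin\nu X$ and there is exactly one $i\in\{1,\dots,n\}$ with $a_i=M$, if and only if $M\notin\nu X$ and there is exactly one $i\in\{1,\dots,n\}$ with $a_i=M=s$.
   Context: A semiring $(X,+,0,\cdot)$: $(X,+,0)$ commutative monoid, $(X,\cdot)$ semigroup, distributivity, $0$ absorbing. Intrinsic order: $a\le b$ iff $a+x=b$ for some $x$. $\nu(x)=x+x$; $\nu X=\{a: a=a+a\}$. A supertropical semiring is a unital commutative semiring with $2=4$ (where $n=1+\dots+1$), such that $a+b\in\{a,b\}$ whenever $\nu(a)\ne\nu(b)$, and $a+b=\nu(a)$ whenever $\nu(a)=\nu(b)$. A bounded join-semilattice is a partial order in which every finite subset has a least upper bound. *)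

theory Defs
  imports Main
begin

text \<open>Unital commutative semiring in the sense of the paper: commutative additive monoid,
commutative multiplicative monoid, distributivity, 0 absorbing (no requirement 0 \<noteq> 1).\<close>

definition nu :: "'a::plus \<Rightarrow> 'a" where
  "nu x = x + x"

definition nuX :: "'a::plus set" where
  "nuX = {a. a = a + a}"

class supertropical = comm_semiring_0 + comm_monoid_mult +
  assumes two_eq_four: "(1 + 1 :: 'a) = 1 + 1 + 1 + 1"
  and add_distinct_nu: "a + a \<noteq> b + b \<Longrightarrow> a + b = a \<or> a + b = b"
  and add_equal_nu: "a + a = b + b \<Longrightarrow> a + b = a + a"

lemma (in supertropical) "nu a = a + a" by (simp add: nu_def)

definition ile :: "'a::plus \<Rightarrow> 'a \<Rightarrow> bool" where
  "ile a b \<longleftrightarrow> (\<exists>x. a + x = b)"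

definition ile_rel :: "('a::plus \<times> 'a) set" where
  "ile_rel = {(a, b). ile a b}"

definition is_ilub :: "'a::plus set \<Rightarrow> 'a \<Rightarrow> bool" where
  "is_ilub A m \<longleftrightarrow> (\<forall>a\<in>A. ile a m) \<and> (\<forall>u. (\<forall>a\<in>A. ile a u) \<longrightarrow> ile m u)"

end

theory Submission
  imports Defs
begin

text \<open>The identity 2 = 4 forces 3a = 2a, i.e. a + \<nu>a = \<nu>a, and together with the
supertropical addition rules this yields: x \<le> u holds iff u = x or x + u = u. From this
characterisation antisymmetry and the formula for binary joins are immediate. For a finite family
with supremum M, induction over the family shows that the sum equals M if exactly one member
equals M and \<nu>M otherwise. The step in which M becomes attained for the first time uses that a
supremum which is not attained is a ghost, since it arises as \<nu> of some member.\<close>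

definition ijoin :: "'a::plus \<Rightarrow> 'a \<Rightarrow> 'a" where
  "ijoin x y = (if x \<noteq> y then x + y else x)"

lemma add_nu_self: "(a::'a::supertropical) + nu a = nu a"
proof -
  have "a * (1 + 1) = a * (1 + 1 + 1 + 1)"
    using two_eq_four by metis
  then have "nu a + nu a = nu a"
    by (simp add: nu_def distrib_left add.assoc)
  then show ?thesis
    using add_equal_nu[of a "nu a"] by (simp add: nu_def)
qed

lemma nu_mem_nuX: "nu (a::'a::supertropical) \<in> nuX"
  using add_nu_self[of a] by (simp add: nuX_def nu_def add.assoc)

lemma nu_eq_self: "(a::'a::supertropical) \<in> nuX \<Longrightarrow> nu a = a"
  by (simp add: nuX_def nu_def)

lemma add_cases:
  obtains "(a::'a::supertropical) + b = a" | "a + b = b" | "nu a = nu b" "a + b = nu a"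
  using add_distinct_nu add_equal_nu unfolding nu_def by blast

lemma ile_iff: "ile (a::'a::supertropical) b \<longleftrightarrow> b = a \<or> a + b = b"
proof
  assume "ile a b"
  then obtain x where b: "b = a + x"
    by (auto simp: ile_def)
  show "b = a \<or> a + b = b"
    by (cases rule: add_cases[of a x]) (use b add_nu_self[of a] in \<open>auto simp: add.assoc[symmetric]\<close>)
next
  show "b = a \<or> a + b = b \<Longrightarrow> ile a b"
    unfolding ile_def by (metis add_0_right)
qed

lemma ile_refl: "ile (a::'a::supertropical) a"
  by (simp add: ile_iff)

lemma ile_trans: "ile (a::'a::supertropical) b \<Longrightarrow> ile b c \<Longrightarrow> ile a c"
  unfolding ile_def by (metis add.assoc)

lemma ile_antisym: "ile (a::'a::supertropical) b \<Longrightarrow> ile b a \<Longrightarrow> a = b"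
  unfolding ile_iff by (metis add.commute)

lemma partial_order_on_ile_rel: "partial_order_on (UNIV::'a::supertropical set) ile_rel"
  unfolding partial_order_on_def preorder_on_def refl_on_def trans_def antisym_def ile_rel_def
  using ile_refl ile_trans ile_antisym by blast

lemma is_ilub_unique: "is_ilub A (m::'a::supertropical) \<Longrightarrow> is_ilub A m' \<Longrightarrow> m = m'"
  unfolding is_ilub_def by (meson ile_antisym)

lemma is_ilub_empty: "is_ilub {} (0::'a::supertropical)"
  unfolding is_ilub_def ile_def by simp

lemma is_ilub_pair: "is_ilub {x, y} (ijoin x (y::'a::supertropical))"
proof (cases "x = y")
  case True
  then show ?thesis
    by (simp add: ijoin_def is_ilub_def ile_refl)
next
  case False
  have "ile x (x + y)" "ile y (x + y)"
    unfolding ile_def by (auto simp: add.commute)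
  moreover have "ile (x + y) u" if "ile x u" "ile y u" for u
    using that False unfolding ile_iff by (metis add.assoc add.commute)
  ultimately show ?thesis
    using False by (simp add: ijoin_def is_ilub_def)
qed

lemma is_ilub_insert: "is_ilub A (m::'a::supertropical) \<Longrightarrow> is_ilub (insert b A) (ijoin b m)"
  using is_ilub_pair[of b m] unfolding is_ilub_def by (blast intro: ile_trans)

lemma finite_imp_ex_ilub: "finite A \<Longrightarrow> \<exists>m::'a::supertropical. is_ilub A m"
  by (induction A rule: finite_induct) (use is_ilub_empty is_ilub_insert in blast)+

lemma ilub_mem_if_notin_nuX:
  assumes "finite A" "is_ilub A (m::'a::supertropical)" "m \<notin> nuX"
  shows "m \<in> A"
  using assms
proof (induction A arbitrary: m rule: finite_induct)
  case empty
  then have "m = 0"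
    using is_ilub_unique is_ilub_empty by blast
  then show ?case
    using empty.prems(2) by (simp add: nuX_def)
next
  case (insert b A)
  obtain m0 where m0: "is_ilub A m0"
    using finite_imp_ex_ilub insert.hyps(1) by blast
  have m: "m = ijoin b m0"
    using is_ilub_unique insert.prems(1) is_ilub_insert[OF m0] by blast
  show ?case
  proof (cases "b = m0")
    case True
    then show ?thesis
      using m by (simp add: ijoin_def)
  next
    case False
    then have m_eq: "m = b + m0"
      using m by (simp add: ijoin_def)
    show ?thesis
    proof (cases rule: add_cases[of b m0])
      case 2
      then show ?thesis
        using m_eq insert.IH[OF m0] insert.prems(2) by simp
    next
      case 3
      then show ?thesis
        using m_eq nu_mem_nuX[of b] insert.prems(2) by simp
    qed (simp add: m_eq)
  qed
qed

lemma add_if_eq_or_nu: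
  assumes "s = a \<or> s = nu (a::'a::supertropical)"
  shows "b + s = (if b + a = a then s else b + a)"
proof -
  have s: "b + s = b + a \<or> b + s = (b + a) + a"
    using assms by (auto simp: nu_def add.assoc)
  show ?thesis
  proof (cases rule: add_cases[of b a])
    case 1
    then show ?thesis
      using s assms by (auto simp: nu_def)
  next
    case 2
    then show ?thesis
      using assms by (metis add.assoc nu_def)
  next
    case 3
    then have "(b + a) + a = b + a"
      using add_nu_self[of a] by (simp add: add.commute)
    then show ?thesis
      using s assms 3 by (auto simp: nu_def)
  qed
qed

lemma sum_insert_ilub_eq:
  fixes f :: "'b \<Rightarrow> 'a::supertropical"
  assumes I: "finite I" "j \<notin> I" and m0: "is_ilub (f ` I) m0" and new: "f j = m0"
    and IH: "sum f I = (if card {i \<in> I. f i = m0} = 1 then m0 else nu m0)"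
  shows "sum f (insert j I) = (if card {i \<in> insert j I. f i = m0} = 1 then m0 else nu m0)"
proof -
  have "{i \<in> insert j I. f i = m0} = insert j {i \<in> I. f i = m0}"
    using new by auto
  then have card: "card {i \<in> insert j I. f i = m0} = Suc (card {i \<in> I. f i = m0})"
    using I by simp
  have sum: "sum f (insert j I) = m0 + sum f I"
    using I new by simp
  show ?thesis
  proof (cases "card {i \<in> I. f i = m0} = 0")
    case True
    then have "m0 \<notin> f ` I"
      using I(1) by auto
    then have "nu m0 = m0"
      using ilub_mem_if_notin_nuX[OF _ m0] I(1) nu_eq_self by blast
    then show ?thesis
      using True IH sum card add_nu_self[of m0] by simp
  next
    case False
    then show ?thesis
      using IH sum card add_nu_self[of m0] by (simp add: nu_def)
  qed
qed

lemma sum_insert_ilub_neq: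
  fixes f :: "'b \<Rightarrow> 'a::supertropical"
  assumes I: "finite I" "j \<notin> I" and m0: "is_ilub (f ` I) m0" and new: "f j \<noteq> m0"
    and IH: "sum f I = (if card {i \<in> I. f i = m0} = 1 then m0 else nu m0)"
  defines "m \<equiv> f j + m0"
  shows "sum f (insert j I) = (if card {i \<in> insert j I. f i = m} = 1 then m else nu m)"
proof -
  have "sum f I = m0 \<or> sum f I = nu m0"
    using IH by simp
  then have sum: "sum f (insert j I) = (if m = m0 then sum f I else m)"
    using add_if_eq_or_nu[of "sum f I" m0 "f j"] I by (simp add: m_def)
  show ?thesis
  proof (cases "m = m0")
    case True
    then have "{i \<in> insert j I. f i = m} = {i \<in> I. f i = m0}"
      using new by auto
    then show ?thesis
      using True IH sum by simp
  next
    case False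
    have "card {i \<in> insert j I. f i = m} = 1 \<or> m \<in> nuX"
    proof (cases rule: add_cases[of "f j" m0])
      case 1
      then have "ile m0 (f j)"
        by (simp add: ile_iff add.commute)
      have "f i \<noteq> f j" if "i \<in> I" for i
      proof
        assume "f i = f j"
        then have "ile (f j) m0"
          using m0 that unfolding is_ilub_def by (metis image_eqI)
        then show False
          using \<open>ile m0 (f j)\<close> new ile_antisym by blast
      qed
      then have "{i \<in> insert j I. f i = m} = {j}"
        using 1 by (auto simp: m_def)
      then show ?thesis
        by simp
    qed (use False nu_mem_nuX in \<open>auto simp: m_def\<close>)
    then show ?thesis
      using False sum nu_eq_self[of m] by auto
  qed
qed

lemma sum_eq_ilub:
  fixes f :: "'b \<Rightarrow> 'a::supertropical"
  assumes "finite I" and "is_ilub (f ` I) m"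
  shows "sum f I = (if card {i \<in> I. f i = m} = 1 then m else nu m)"
  using assms
proof (induction I arbitrary: m rule: finite_induct)
  case empty
  then have "m = 0"
    using is_ilub_unique is_ilub_empty by (metis image_empty)
  then show ?case
    by (simp add: nu_def)
next
  case (insert j I)
  obtain m0 where m0: "is_ilub (f ` I) m0"
    using finite_imp_ex_ilub insert.hyps(1) by blast
  have "m = ijoin (f j) m0"
    using is_ilub_unique insert.prems is_ilub_insert[OF m0, of "f j"] by simp
  then show ?case
    using sum_insert_ilub_eq[OF insert.hyps m0] sum_insert_ilub_neq[OF insert.hyps m0]
      insert.IH[OF m0] by (auto simp: ijoin_def)
qed

theorem lemma5p6:
  fixes dummy :: "'a::supertropical"
  shows "(partial_order_on (UNIV :: 'a set) ile_rel
          \<and> (\<forall>A :: 'a set. finite A \<longrightarrow> (\<exists>m. is_ilub A m))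
          \<and> is_ilub ({} :: 'a set) 0
          \<and> (\<forall>x y :: 'a. is_ilub {x, y} (if x \<noteq> y then x + y else x)))
       \<and> (\<forall>(n::nat) (a :: nat \<Rightarrow> 'a) M.
            is_ilub (a ` {1..n}) M \<longrightarrow>
            (((\<Sum>i\<in>{1..n}. a i) \<notin> nuX
               \<longleftrightarrow> (M \<notin> nuX \<and> (\<exists>!i. i \<in> {1..n} \<and> a i = M)))
             \<and> ((M \<notin> nuX \<and> (\<exists>!i. i \<in> {1..n} \<and> a i = M))
               \<longleftrightarrow> (M \<notin> nuX \<and> (\<exists>!i. i \<in> {1..n} \<and> a i = M \<and> M = (\<Sum>i\<in>{1..n}. a i))))))"
proof (intro conjI allI impI)
  show "partial_order_on (UNIV :: 'a set) ile_rel"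
    by (rule partial_order_on_ile_rel)
  show "\<exists>m. is_ilub A m" if "finite A" for A :: "'a set"
    using finite_imp_ex_ilub[OF that] .
  show "is_ilub ({} :: 'a set) 0"
    by (rule is_ilub_empty)
  show "is_ilub {x, y} (if x \<noteq> y then x + y else x)" for x y :: 'a
    using is_ilub_pair[of x y] by (simp add: ijoin_def)
next
  fix n :: nat and a :: "nat \<Rightarrow> 'a" and M
  define S where "S = {i \<in> {1..n}. a i = M}"
  assume "is_ilub (a ` {1..n}) M"
  from sum_eq_ilub[OF finite_atLeastAtMost this]
  have sum: "(\<Sum>i\<in>{1..n}. a i) = (if card S = 1 then M else nu M)"
    unfolding S_def .
  have unique: "(\<exists>!i. i \<in> {1..n} \<and> a i = M) \<longleftrightarrow> card S = 1"
    unfolding S_def is_singleton_altdef[symmetric] is_singleton_iff_ex1 by simp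
  show "(\<Sum>i\<in>{1..n}. a i) \<notin> nuX \<longleftrightarrow> M \<notin> nuX \<and> (\<exists>!i. i \<in> {1..n} \<and> a i = M)"
    unfolding sum unique by (simp add: nu_mem_nuX)
  show "M \<notin> nuX \<and> (\<exists>!i. i \<in> {1..n} \<and> a i = M) \<longleftrightarrow>
        M \<notin> nuX \<and> (\<exists>!i. i \<in> {1..n} \<and> a i = M \<and> M = (\<Sum>i\<in>{1..n}. a i))"
  proof (cases "card S = 1")
    case True
    then have "(\<Sum>i\<in>{1..n}. a i) = M"
      using sum by simp
    then show ?thesis
      by simp
  next
    case False
    then have "\<not> (\<exists>!i. i \<in> {1..n} \<and> a i = M)"
      using unique by simp
    moreover have "M = (\<Sum>i\<in>{1..n}. a i) \<Longrightarrow> M \<in> nuX"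
      using False sum nu_mem_nuX[of M] by simp
    ultimately show ?thesis
      by blast
  qed
qed

end
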